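(* A bivariate tail dependence function $\Lambda\in\mathcal{M}_2$ is idempotent, i.e. $\Lambda*\Lambda=\Lambda$, if and only if $\Lambda(w_1,w_2)=\min\{w_1,w_2\}$ for all $(w_1,w_2)$ or $\Lambda\equiv0$.
   Context: $\mathcal{M}_2$ is the set of bivariate tail dependence functions $\Lambda(\mathbf{w})=\lim_{s\searrow0}C(s\mathbf{w})/s$, $\mathbf{w}\in\mathbb{R}_+^2$ ($\mathbb{R}_+=[0,\infty)$), of $2$-copulas $C$. The Markov product is $(\Lambda_1*\Lambda_2)(w_1,w_2):=\int_0^\infty\partial_2\Lambda_1(w_1,t)\,\partial_1\Lambda_2(t,w_2)\,dt$. *)

theory Defs
  imports "HOL-Analysis.Analysis"
begin

text \<open>A 2-copula, given by its values on the unit square (values outside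
  the unit square are irrelevant and unconstrained).\<close>
definition is_copula2 :: "(real \<Rightarrow> real \<Rightarrow> real) \<Rightarrow> bool" where
  "is_copula2 C \<longleftrightarrow>
     (\<forall>u\<in>{0..1}. C u 0 = 0 \<and> C 0 u = 0 \<and> C u 1 = u \<and> C 1 u = u) \<and>
     (\<forall>u1 u2 v1 v2. 0 \<le> u1 \<and> u1 \<le> u2 \<and> u2 \<le> 1 \<and> 0 \<le> v1 \<and> v1 \<le> v2 \<and> v2 \<le> 1 \<longrightarrow>
        C u2 v2 - C u2 v1 - C u1 v2 + C u1 v1 \<ge> 0)"

definition is_tdf_of :: "(real \<Rightarrow> real \<Rightarrow> real) \<Rightarrow> (real \<Rightarrow> real \<Rightarrow> real) \<Rightarrow> bool" where
  "is_tdf_of C \<Lambda> \<longleftrightarrow>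
     (\<forall>w1 w2. 0 \<le> w1 \<longrightarrow> 0 \<le> w2 \<longrightarrow>
        ((\<lambda>s. C (s * w1) (s * w2) / s) \<longlongrightarrow> \<Lambda> w1 w2) (at_right 0))"

definition M2 :: "(real \<Rightarrow> real \<Rightarrow> real) set" where
  "M2 = {\<Lambda>. \<exists>C. is_copula2 C \<and> is_tdf_of C \<Lambda>}"

text \<open>Markov product; the partial derivatives exist almost everywhere
  (tail dependence functions are Lipschitz), the integral is the Lebesgue
  integral over [0,infinity) w.r.t. (complete) Lebesgue measure.\<close>
definition markov_prod ::
  "(real \<Rightarrow> real \<Rightarrow> real) \<Rightarrow> (real \<Rightarrow> real \<Rightarrow> real) \<Rightarrow> real \<Rightarrow> real \<Rightarrow> real" where
  "markov_prod \<Lambda>1 \<Lambda>2 w1 w2 =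
     (LINT t:{0..}|lebesgue. deriv (\<lambda>t. \<Lambda>1 w1 t) t * deriv (\<lambda>t. \<Lambda>2 t w2) t)"

end

theory Submission
  imports Defs
begin

text \<open>Every section \<open>t \<mapsto> \<Lambda>(w, t)\<close> of \<open>\<Lambda> \<in> M\<^sub>2\<close> is nondecreasing, 1-Lipschitz and concave on
  \<open>[0, \<infinity>)\<close>; concavity comes from homogeneity together with the 2-increasing property. Hence
  the section is differentiable off a countable set and is the integral of its right derivative.
  Put \<open>H = \<partial>\<^sub>2\<Lambda>(1, \<cdot>)\<close> and \<open>K = \<partial>\<^sub>1\<Lambda>(\<cdot>, y)\<close>: then \<open>H\<close> is nonincreasing, \<open>0 \<le> K \<le> 1\<close> and
  \<open>\<integral> K \<le> y\<close>, while idempotence at \<open>(1, y)\<close> says \<open>\<integral> H K = \<integral>\<^sub>0\<^sup>y H\<close>. This is the equality case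
  of the bathtub principle, so \<open>K = 1\<close> almost everywhere where \<open>H > H(y)\<close>. Taking \<open>x\<close> at a
  strict drop of \<open>H\<close> gives \<open>\<Lambda>(x, y) = x\<close> for all \<open>y > x\<close>, and homogeneity then forces
  \<open>\<Lambda>(1, 1) \<in> {0, 1}\<close>; these two values make \<open>\<Lambda>\<close> equal to \<open>0\<close> or \<open>min\<close>. The converse is
  a direct computation.\<close>

section \<open>Tail dependence functions\<close>

lemma copula2_boundary:
  assumes "is_copula2 C" "0 \<le> u" "u \<le> 1"
  shows "C u 0 = 0" "C 0 u = 0" "C u 1 = u" "C 1 u = u"
  using assms unfolding is_copula2_def by auto

lemma copula2_rect:
  assumes "is_copula2 C" "0 \<le> u1" "u1 \<le> u2" "u2 \<le> 1" "0 \<le> v1" "v1 \<le> v2" "v2 \<le> 1"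
  shows "0 \<le> C u2 v2 - C u2 v1 - C u1 v2 + C u1 v1"
  using assms unfolding is_copula2_def by blast

lemma copula2_bounds:
  assumes C: "is_copula2 C" and u: "0 \<le> u" "u \<le> 1" and v: "0 \<le> v1" "v1 \<le> v2" "v2 \<le> 1"
  shows "0 \<le> C u v1" "C u v1 \<le> u" "C u v1 \<le> v1" "C u v2 - C u v1 \<le> v2 - v1"
  using copula2_rect[OF C, of 0 u 0 v1] copula2_rect[OF C, of 0 u v1 1]
    copula2_rect[OF C, of u 1 0 v1] copula2_rect[OF C, of u 1 v1 v2]
    copula2_boundary[OF C] u v by auto

lemma eventually_scaled_in_unit_interval:
  fixes a b :: real
  assumes "0 \<le> a" "0 \<le> b"
  shows "\<forall>\<^sub>F s in at_right 0. 0 < s \<and> s * a \<le> 1 \<and> s * b \<le> 1"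
  unfolding eventually_at_right_field
proof (intro exI conjI allI impI)
  show "(0::real) < 1 / (a + b + 1)" using assms by simp
  fix s :: real assume s: "0 < s" "s < 1 / (a + b + 1)"
  then have "s * (a + b + 1) < 1" using assms by (simp add: field_simps)
  moreover have "0 \<le> s * a" "0 \<le> s * b" using s assms by simp_all
  ultimately show "0 < s" "s * a \<le> 1" "s * b \<le> 1"
    using s by (simp_all add: algebra_simps)
qed

lemma tdf_tendsto:
  "is_tdf_of C \<Lambda> \<Longrightarrow> 0 \<le> a \<Longrightarrow> 0 \<le> b \<Longrightarrow> ((\<lambda>s. C (s * a) (s * b) / s) \<longlongrightarrow> \<Lambda> a b) (at_right 0)"
  unfolding is_tdf_of_def by blast

lemma M2E:
  assumes "\<Lambda> \<in> M2"
  obtains C where "is_copula2 C" "is_tdf_of C \<Lambda>"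
  using assms unfolding M2_def by blast

lemma M2_bounds:
  assumes "\<Lambda> \<in> M2" and ab: "0 \<le> a" "0 \<le> b"
  shows "0 \<le> \<Lambda> a b" "\<Lambda> a b \<le> a" "\<Lambda> a b \<le> b"
proof -
  obtain C where C: "is_copula2 C" and T: "is_tdf_of C \<Lambda>" using assms(1) by (rule M2E)
  have ev: "\<forall>\<^sub>F s in at_right 0. 0 \<le> C (s * a) (s * b) / s \<and>
      C (s * a) (s * b) / s \<le> a \<and> C (s * a) (s * b) / s \<le> b"
    using eventually_scaled_in_unit_interval[OF ab]
  proof eventually_elim
    case (elim s)
    then have "0 \<le> C (s * a) (s * b)" "C (s * a) (s * b) \<le> s * a" "C (s * a) (s * b) \<le> s * b"
      using copula2_bounds(1-3)[OF C, of "s * a" "s * b" "s * b"] ab by auto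
    then show ?case using elim by (simp add: divide_le_eq mult.commute)
  qed
  show "0 \<le> \<Lambda> a b"
    by (rule tendsto_lowerbound[OF tdf_tendsto[OF T ab]]) (use ev in \<open>auto elim: eventually_mono\<close>)
  show "\<Lambda> a b \<le> a"
    by (rule tendsto_upperbound[OF tdf_tendsto[OF T ab]]) (use ev in \<open>auto elim: eventually_mono\<close>)
  show "\<Lambda> a b \<le> b"
    by (rule tendsto_upperbound[OF tdf_tendsto[OF T ab]]) (use ev in \<open>auto elim: eventually_mono\<close>)
qed

lemma M2_lipschitz2:
  assumes "\<Lambda> \<in> M2" and b: "0 \<le> a" "0 \<le> b1" "b1 \<le> b2"
  shows "\<Lambda> a b2 - \<Lambda> a b1 \<le> b2 - b1"
proof -
  obtain C where C: "is_copula2 C" and T: "is_tdf_of C \<Lambda>" using assms(1) by (rule M2E)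
  show ?thesis
  proof (rule tendsto_upperbound[OF tendsto_diff[OF tdf_tendsto[OF T, of a b2] tdf_tendsto[OF T, of a b1]]])
    show "\<forall>\<^sub>F s in at_right 0. C (s * a) (s * b2) / s - C (s * a) (s * b1) / s \<le> b2 - b1"
      using eventually_scaled_in_unit_interval[OF b(1) order_trans[OF b(2,3)]]
    proof eventually_elim
      case (elim s)
      then have "C (s * a) (s * b2) - C (s * a) (s * b1) \<le> s * b2 - s * b1"
        using copula2_bounds(4)[OF C, of "s * a" "s * b1" "s * b2"] b by (auto intro: mult_left_mono)
      then show ?case
        using elim by (simp add: divide_le_eq diff_divide_distrib[symmetric] right_diff_distrib mult.commute)
    qed
  qed (use b in auto)
qed

lemma M2_rect:
  assumes "\<Lambda> \<in> M2" and ab: "0 \<le> a1" "a1 \<le> a2" "0 \<le> b1" "b1 \<le> b2"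
  shows "0 \<le> \<Lambda> a2 b2 - \<Lambda> a2 b1 - \<Lambda> a1 b2 + \<Lambda> a1 b1"
proof -
  obtain C where C: "is_copula2 C" and T: "is_tdf_of C \<Lambda>" using assms(1) by (rule M2E)
  let ?C = "\<lambda>s a b. C (s * a) (s * b) / s"
  show ?thesis
  proof (rule tendsto_lowerbound[OF tendsto_add[OF tendsto_diff[OF tendsto_diff[OF
        tdf_tendsto[OF T, of a2 b2] tdf_tendsto[OF T, of a2 b1]] tdf_tendsto[OF T, of a1 b2]]
        tdf_tendsto[OF T, of a1 b1]]])
    show "\<forall>\<^sub>F s in at_right 0. 0 \<le> ?C s a2 b2 - ?C s a2 b1 - ?C s a1 b2 + ?C s a1 b1"
      using eventually_scaled_in_unit_interval[OF order_trans[OF ab(1,2)] order_trans[OF ab(3,4)]]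
    proof eventually_elim
      case (elim s)
      then have "0 \<le> (C (s * a2) (s * b2) - C (s * a2) (s * b1) - C (s * a1) (s * b2) + C (s * a1) (s * b1)) / s"
        using copula2_rect[OF C, of "s * a1" "s * a2" "s * b1" "s * b2"] ab by (auto intro: mult_left_mono)
      then show ?case by (simp add: add_divide_distrib diff_divide_distrib)
    qed
  qed (use ab in auto)
qed

lemma M2_homogeneous:
  assumes "\<Lambda> \<in> M2" and ab: "0 \<le> a" "0 \<le> b" and c: "0 < c"
  shows "\<Lambda> (c * a) (c * b) = c * \<Lambda> a b"
proof -
  obtain C where T: "is_tdf_of C \<Lambda>" using assms(1) by (rule M2E)
  have scale: "filterlim (\<lambda>s. c * s) (at_right 0) (at_right (0::real))"
  proof (rule tendsto_imp_filterlim_at_right)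
    show "((\<lambda>s. c * s) \<longlongrightarrow> 0) (at_right (0::real))"
      by (rule tendsto_eq_intros) (auto intro!: tendsto_eq_intros)
    show "\<forall>\<^sub>F s in at_right 0. 0 < c * s"
      using c by (simp add: eventually_at_right_field) (auto intro!: exI[of _ 1])
  qed
  have "((\<lambda>s. c * (C ((c * s) * a) ((c * s) * b) / (c * s))) \<longlongrightarrow> c * \<Lambda> a b) (at_right 0)"
    by (rule tendsto_mult_left, rule filterlim_compose[OF tdf_tendsto[OF T ab] scale])
  moreover have "\<forall>\<^sub>F s in at_right 0.
      c * (C ((c * s) * a) ((c * s) * b) / (c * s)) = C (s * (c * a)) (s * (c * b)) / s"
    using c by (simp add: eventually_at_right_field) (auto intro!: exI[of _ 1] simp: ac_simps)
  ultimately have "((\<lambda>s. C (s * (c * a)) (s * (c * b)) / s) \<longlongrightarrow> c * \<Lambda> a b) (at_right 0)"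
    by (rule Lim_transform_eventually)
  then show ?thesis
    using tendsto_unique[OF _ tdf_tendsto[OF T, of "c * a" "c * b"]] ab c by simp
qed

lemma M2_swap:
  assumes "\<Lambda> \<in> M2"
  shows "(\<lambda>a b. \<Lambda> b a) \<in> M2"
proof -
  obtain C where C: "is_copula2 C" "is_tdf_of C \<Lambda>" using assms by (rule M2E)
  have "is_copula2 (\<lambda>u v. C v u)"
    using C(1) unfolding is_copula2_def by (smt (verit))
  moreover have "is_tdf_of (\<lambda>u v. C v u) (\<lambda>a b. \<Lambda> b a)"
    using C(2) unfolding is_tdf_of_def by blast
  ultimately show ?thesis unfolding M2_def by blast
qed

lemma M2_zero_left: "\<Lambda> \<in> M2 \<Longrightarrow> 0 \<le> b \<Longrightarrow> \<Lambda> 0 b = 0"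
  using M2_bounds[of \<Lambda> 0 b] by simp

lemma M2_mono2: "\<Lambda> \<in> M2 \<Longrightarrow> 0 \<le> a \<Longrightarrow> 0 \<le> b1 \<Longrightarrow> b1 \<le> b2 \<Longrightarrow> \<Lambda> a b1 \<le> \<Lambda> a b2"
  using M2_rect[of \<Lambda> 0 a b1 b2] M2_zero_left[of \<Lambda> b1] M2_zero_left[of \<Lambda> b2] by simp

lemma M2_mono1: "\<Lambda> \<in> M2 \<Longrightarrow> 0 \<le> b \<Longrightarrow> 0 \<le> a1 \<Longrightarrow> a1 \<le> a2 \<Longrightarrow> \<Lambda> a1 b \<le> \<Lambda> a2 b"
  using M2_mono2[OF M2_swap[of \<Lambda>], of b a1 a2] by simp

lemma M2_lipschitz1: "\<Lambda> \<in> M2 \<Longrightarrow> 0 \<le> b \<Longrightarrow> 0 \<le> a1 \<Longrightarrow> a1 \<le> a2 \<Longrightarrow> \<Lambda> a2 b - \<Lambda> a1 b \<le> a2 - a1"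
  using M2_lipschitz2[OF M2_swap[of \<Lambda>], of b a1 a2] by simp

lemma M2_eq_scaled:
  assumes "\<Lambda> \<in> M2" "0 \<le> w1" "0 < w2"
  shows "\<Lambda> w1 w2 = w2 * \<Lambda> (w1 / w2) 1"
  using M2_homogeneous[OF assms(1), of "w1 / w2" 1 w2] assms by simp

section \<open>Concavity from geometric increments\<close>

lemma min_le_if_geometric_increments:
  fixes \<phi> :: "real \<Rightarrow> real"
  assumes cont: "continuous_on {x..z} \<phi>" and x: "0 \<le> x" and t: "t \<in> {x..z}"
    and geo: "\<And>a r. 0 < a \<Longrightarrow> 1 < r \<Longrightarrow> \<phi> (a * r) - \<phi> a \<le> r * (\<phi> a - \<phi> (a / r))"
  shows "min (\<phi> x) (\<phi> z) \<le> \<phi> t"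
proof (rule ccontr)
  assume "\<not> ?thesis"
  then have t_below: "\<phi> t < \<phi> x" "\<phi> t < \<phi> z" by auto
  obtain t0 where t0: "t0 \<in> {x..z}" "\<And>s. s \<in> {x..z} \<Longrightarrow> \<phi> t0 \<le> \<phi> s"
    using continuous_attains_inf[OF compact_Icc _ cont] t by fastforce
  define m where "m = \<phi> t0"
  define S where "S = {x..z} \<inter> \<phi> -` {m}"
  have "S \<noteq> {}" "bdd_above S" using t0 by (auto simp: S_def m_def bdd_above_def)
  moreover have "closed S"
    unfolding S_def by (rule continuous_closed_preimage[OF cont]) auto
  ultimately have "Sup S \<in> S" by (rule closed_contains_Sup)
  \<comment> \<open>at the largest minimiser the geometric increment to the right is positive and the one
    to the left is not, contradicting the hypothesis\<close>
  define t1 where "t1 = Sup S"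
  have t1: "t1 \<in> {x..z}" "\<phi> t1 = m" using \<open>Sup S \<in> S\<close> by (auto simp: S_def t1_def)
  have "m \<le> \<phi> t" using t0 t by (simp add: m_def)
  then have "x < t1" "t1 < z" using t1 t_below by (auto simp: less_le)
  define r where "r = min (z / t1) (2 * t1 / (t1 + x))"
  have t1_pos: "0 < t1" using \<open>x < t1\<close> x by simp
  have r: "1 < r" using \<open>x < t1\<close> \<open>t1 < z\<close> t1_pos x by (simp add: r_def field_simps)
  have "t1 < t1 * r" using r t1_pos by simp
  moreover have "t1 * r \<le> z" using t1_pos by (simp add: r_def field_simps min_def)
  ultimately have "t1 * r \<in> {x..z}" using t1 by auto
  moreover have "t1 * r \<notin> S"
    using cSup_upper[OF _ \<open>bdd_above S\<close>, of "t1 * r"] r t1_pos by (auto simp: t1_def)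
  ultimately have "m < \<phi> (t1 * r)" using t0(2) by (fastforce simp: S_def m_def less_le)
  have "r \<le> 2 * t1 / (t1 + x)" by (simp add: r_def)
  then have "r * (t1 + x) \<le> 2 * t1" using t1_pos x by (simp add: le_divide_eq)
  with \<open>t1 < t1 * r\<close> have "x * r \<le> t1" by (simp add: algebra_simps)
  then have "x \<le> t1 / r" using r by (simp add: le_divide_eq)
  moreover have "t1 / r \<le> t1" using r t1_pos by (simp add: divide_le_eq)
  ultimately have "t1 / r \<in> {x..z}" using \<open>t1 < z\<close> by auto
  then have "m \<le> \<phi> (t1 / r)" using t0(2) by (simp add: m_def)
  then have "r * (\<phi> t1 - \<phi> (t1 / r)) \<le> 0" using t1 r by (simp add: mult_nonneg_nonpos)
  with geo[OF t1_pos r] \<open>m < \<phi> (t1 * r)\<close> t1 show False by simp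
qed

lemma concave_on_if_geometric_increments:
  fixes g :: "real \<Rightarrow> real"
  assumes cont: "continuous_on {0..} g"
    and geo: "\<And>a r. 0 < a \<Longrightarrow> 1 < r \<Longrightarrow> g (a * r) - g a \<le> r * (g a - g (a / r))"
  shows "concave_on {0..} g"
proof (rule concave_on_linorderI)
  fix t x y :: real assume t: "0 < t" "t < 1" and xy: "x \<in> {0..}" "y \<in> {0..}" "x < y"
  \<comment> \<open>subtracting the chord through x and y preserves the hypothesis\<close>
  define k where "k = (g y - g x) / (y - x)"
  define \<phi> where "\<phi> s = g s - g x - k * (s - x)" for s
  have "continuous_on {x..y} \<phi>"
    unfolding \<phi>_def by (intro continuous_intros continuous_on_subset[OF cont]) (use xy in auto)
  moreover have "\<phi> (a * r) - \<phi> a \<le> r * (\<phi> a - \<phi> (a / r))" if "0 < a" "1 < r" for a r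
  proof -
    have "r \<noteq> 0" using that by simp
    then have "\<phi> (a * r) - \<phi> a - r * (\<phi> a - \<phi> (a / r)) = g (a * r) - g a - r * (g a - g (a / r))"
      by (simp add: \<phi>_def algebra_simps)
    then show ?thesis using geo[OF that] by linarith
  qed
  moreover have "(1 - t) * x + t * y \<in> {x..y}"
    using mult_left_mono[of x y t] mult_left_mono[of x y "1 - t"] t xy by (simp add: algebra_simps)
  ultimately have "min (\<phi> x) (\<phi> y) \<le> \<phi> ((1 - t) * x + t * y)"
    by (intro min_le_if_geometric_increments) (use xy in auto)
  moreover have "\<phi> x = 0" "\<phi> y = 0" using xy by (simp_all add: \<phi>_def k_def)
  ultimately have "k * (t * (y - x)) \<le> g ((1 - t) * x + t * y) - g x"
    by (simp add: \<phi>_def algebra_simps)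
  moreover have "k * (t * (y - x)) = t * (g y - g x)" using xy by (simp add: k_def)
  ultimately show "(1 - t) * g x + t * g y \<le> g ((1 - t) *\<^sub>R x + t *\<^sub>R y)"
    by (simp add: algebra_simps)
qed simp

section \<open>Right derivatives of monotone 1-Lipschitz concave functions\<close>

definition mono_lip_concave :: "(real \<Rightarrow> real) \<Rightarrow> bool" where
  "mono_lip_concave g \<longleftrightarrow>
     (\<forall>s t. 0 \<le> s \<longrightarrow> s \<le> t \<longrightarrow> g s \<le> g t \<and> g t - g s \<le> t - s) \<and> concave_on {0..} g"

lemma continuous_on_if_mono_lip:
  fixes g :: "real \<Rightarrow> real"
  assumes "\<And>s t. 0 \<le> s \<Longrightarrow> s \<le> t \<Longrightarrow> g s \<le> g t \<and> g t - g s \<le> t - s"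
  shows "continuous_on {0..} g"
proof (rule lipschitz_on_continuous_on)
  show "1-lipschitz_on {0..} g"
  proof (rule lipschitz_onI)
    fix x y :: real assume "x \<in> {0..}" "y \<in> {0..}"
    then show "dist (g x) (g y) \<le> 1 * dist x y"
      using assms[of x y] assms[of y x] by (cases "x \<le> y") (auto simp: dist_real_def)
  qed simp
qed

lemma mono_lip_concave_mono_lip:
  "mono_lip_concave g \<Longrightarrow> 0 \<le> s \<Longrightarrow> s \<le> t \<Longrightarrow> g s \<le> g t \<and> g t - g s \<le> t - s"
  unfolding mono_lip_concave_def by blast

lemma mono_lip_concave_continuous_on: "mono_lip_concave g \<Longrightarrow> continuous_on {0..} g"
  by (rule continuous_on_if_mono_lip) (rule mono_lip_concave_mono_lip)

definition slope :: "(real \<Rightarrow> real) \<Rightarrow> real \<Rightarrow> real \<Rightarrow> real" where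
  "slope g s t = (g t - g s) / (t - s)"

definition right_deriv :: "(real \<Rightarrow> real) \<Rightarrow> real \<Rightarrow> real" where
  "right_deriv g t = Sup (slope g t ` {t<..})"

lemma slope_commute: "slope g s t = slope g t s"
  unfolding slope_def by (metis minus_diff_eq minus_divide_divide)

lemma slope_bounds:
  assumes "mono_lip_concave g" "0 \<le> s" "s < t"
  shows "0 \<le> slope g s t" "slope g s t \<le> 1"
  using mono_lip_concave_mono_lip[OF assms(1,2), of t] assms(3)
  by (auto simp: slope_def divide_le_eq)

lemma slope_antimono:
  assumes g: "mono_lip_concave g" and xyz: "0 \<le> x" "x < y" "y < z"
  shows "slope g x z \<le> slope g x y" "slope g y z \<le> slope g x y"
proof -
  have "convex_on {0..} (\<lambda>t. - g t)"
    using g by (simp add: mono_lip_concave_def concave_on_def)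
  moreover have "(- g a - - g b) / (a - b) = - slope g a b" for a b
    unfolding slope_def
    by (metis minus_diff_eq minus_divide_divide minus_divide_left minus_minus diff_minus_eq_add add.commute)
  ultimately have "slope g x z \<le> slope g x y" "slope g y z \<le> slope g x z"
    using convex_on_slope_le[of "{0..}" "\<lambda>t. - g t" x z y] xyz by simp_all
  then show "slope g x z \<le> slope g x y" "slope g y z \<le> slope g x y" by simp_all
qed

lemma slope_le_right_deriv:
  assumes g: "mono_lip_concave g" and "0 \<le> t" "t < u"
  shows "slope g t u \<le> right_deriv g t"
  unfolding right_deriv_def
proof (rule cSup_upper)
  show "bdd_above (slope g t ` {t<..})"
    using slope_bounds(2)[OF g \<open>0 \<le> t\<close>] by (auto simp: bdd_above_def)
qed (use assms in auto)

lemma right_deriv_le_slope: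
  assumes g: "mono_lip_concave g" and "0 \<le> s" "s < t"
  shows "right_deriv g t \<le> slope g s t"
  unfolding right_deriv_def
  by (rule cSup_least) (use slope_antimono(2)[OF g] assms in auto)

lemma right_deriv_bounds:
  assumes g: "mono_lip_concave g" and t: "0 \<le> t"
  shows "0 \<le> right_deriv g t" "right_deriv g t \<le> 1"
proof -
  show "0 \<le> right_deriv g t"
    using slope_le_right_deriv[OF g t, of "t + 1"] slope_bounds(1)[OF g t, of "t + 1"] by simp
  show "right_deriv g t \<le> 1"
    unfolding right_deriv_def by (rule cSup_least) (use slope_bounds(2)[OF g t] in auto)
qed

lemma right_deriv_antimono:
  assumes g: "mono_lip_concave g" and "0 \<le> s" "s \<le> t"
  shows "right_deriv g t \<le> right_deriv g s"
proof (cases "s = t")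
  case False
  then show ?thesis
    using right_deriv_le_slope[OF g, of s t] slope_le_right_deriv[OF g, of s t] assms by simp
qed simp

lemma slope_tendsto_right_deriv:
  assumes g: "mono_lip_concave g" and t: "0 \<le> t"
  shows "(\<lambda>k. slope g t (t + 1 / Suc k)) \<longlonglongrightarrow> right_deriv g t"
proof (rule LIMSEQ_I)
  fix e :: real assume "0 < e"
  have "\<exists>u>t. right_deriv g t - e < slope g t u"
  proof (rule ccontr)
    assume "\<not> ?thesis"
    then have "\<forall>u>t. slope g t u \<le> right_deriv g t - e" by (meson not_less)
    then have "right_deriv g t \<le> right_deriv g t - e"
      unfolding right_deriv_def by (intro cSup_least) auto
    with \<open>0 < e\<close> show False by simp
  qed
  then obtain u where u: "t < u" "right_deriv g t - e < slope g t u" by blast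
  obtain N where N: "inverse (real (Suc N)) < u - t" using reals_Archimedean[of "u - t"] u(1) by auto
  show "\<exists>N. \<forall>k\<ge>N. norm (slope g t (t + 1 / Suc k) - right_deriv g t) < e"
  proof (intro exI allI impI)
    fix k assume "N \<le> k"
    then have "1 / real (Suc k) \<le> 1 / real (Suc N)" by (simp add: frac_le)
    then have "t + 1 / Suc k < u" using N by (simp add: inverse_eq_divide)
    then have "slope g t u \<le> slope g t (t + 1 / Suc k)"
      using slope_antimono(1)[OF g t] by simp
    moreover have "slope g t (t + 1 / Suc k) \<le> right_deriv g t"
      using slope_le_right_deriv[OF g t] by simp
    ultimately show "norm (slope g t (t + 1 / Suc k) - right_deriv g t) < e" using u by auto
  qed
qed

text \<open>Between \<open>t\<close> and \<open>t + h\<close> every difference quotient of \<open>g\<close> lies between the right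
  derivatives at the two end points, so continuity of the right derivative at \<open>t\<close> forces
  differentiability there.\<close>

lemma difference_quotient_between_right_deriv:
  assumes g: "mono_lip_concave g" and h: "h \<noteq> 0" "0 \<le> t + h" and t: "0 \<le> t"
  shows "min (right_deriv g (t + h)) (right_deriv g t) \<le> (g (t + h) - g t) / h \<and>
    (g (t + h) - g t) / h \<le> max (right_deriv g (t + h)) (right_deriv g t)"
proof (cases "0 < h")
  case True
  have "slope g t (t + h) = (g (t + h) - g t) / h" by (simp add: slope_def)
  moreover have "right_deriv g (t + h) \<le> slope g t (t + h)"
    by (rule right_deriv_le_slope[OF g]) (use t True in auto)
  moreover have "slope g t (t + h) \<le> right_deriv g t"
    by (rule slope_le_right_deriv[OF g]) (use t True in auto)
  ultimately show ?thesis by (simp add: min_le_iff_disj le_max_iff_disj)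
next
  case False
  have "slope g (t + h) t = slope g t (t + h)" by (rule slope_commute)
  also have "\<dots> = (g (t + h) - g t) / h" by (simp add: slope_def)
  finally have "slope g (t + h) t = (g (t + h) - g t) / h" .
  moreover have "right_deriv g t \<le> slope g (t + h) t"
    by (rule right_deriv_le_slope[OF g]) (use h False in auto)
  moreover have "slope g (t + h) t \<le> right_deriv g (t + h)"
    by (rule slope_le_right_deriv[OF g]) (use h False in auto)
  ultimately show ?thesis by (simp add: min_le_iff_disj le_max_iff_disj)
qed

lemma has_real_derivative_right_deriv:
  assumes g: "mono_lip_concave g" and t: "0 < t" and cont: "isCont (right_deriv g) t"
  shows "(g has_real_derivative right_deriv g t) (at t)"
proof -
  let ?D = "right_deriv g"
  have abs_between: "\<bar>q - b\<bar> \<le> \<bar>a - b\<bar>" if "min a b \<le> q" "q \<le> max a b" for a b q :: real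
    using that by (auto simp: abs_if min_def max_def split: if_splits)
  have "((\<lambda>h. \<bar>?D (t + h) - ?D t\<bar>) \<longlongrightarrow> 0) (at 0)"
    using cont unfolding isCont_iff by (intro tendsto_rabs_zero) (simp add: LIM_zero)
  moreover have "\<forall>\<^sub>F h in at 0. norm ((g (t + h) - g t) / h - ?D t) \<le> \<bar>?D (t + h) - ?D t\<bar>"
    unfolding eventually_at using t abs_between difference_quotient_between_right_deriv[OF g]
    by (auto intro!: exI[of _ t])
  ultimately have "((\<lambda>h. (g (t + h) - g t) / h - ?D t) \<longlongrightarrow> 0) (at 0)"
    by (rule Lim_null_comparison[rotated])
  then show ?thesis unfolding DERIV_def by (simp add: LIM_zero_iff)
qed

lemma countable_discontinuities_right_deriv:
  assumes g: "mono_lip_concave g"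
  shows "countable {t \<in> {0<..}. \<not> isCont (right_deriv g) t}"
proof -
  have "mono_on {0<..} (\<lambda>t. - right_deriv g t)"
    by (rule mono_onI) (use right_deriv_antimono[OF g] in auto)
  then have "countable {t \<in> {0<..}. \<not> isCont (\<lambda>t. - right_deriv g t) t}"
    by (rule mono_on_ctble_discont_open[rotated]) simp
  moreover have "isCont (right_deriv g) t" if "isCont (\<lambda>t. - right_deriv g t) t" for t
    using isCont_minus[OF that] by simp
  then have "{t \<in> {0<..}. \<not> isCont (right_deriv g) t} \<subseteq>
      {t \<in> {0<..}. \<not> isCont (\<lambda>t. - right_deriv g t) t}"
    by blast
  ultimately show ?thesis by (rule countable_subset[rotated])
qed

lemma has_integral_forward_difference:
  fixes g :: "real \<Rightarrow> real"
  assumes cont: "continuous_on {0..} g" and x: "0 \<le> x" and e: "0 \<le> e"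
  shows "((\<lambda>t. g (t + e) - g t) has_integral (integral {x..x + e} g - integral {0..e} g)) {0..x}"
proof -
  have int: "g integrable_on {a..b}" if "0 \<le> a" for a b
    by (rule integrable_continuous_interval, rule continuous_on_subset[OF cont]) (use that in auto)
  have "(g has_integral integral {e..x + e} g) (cbox (0 + e) (x + e))"
    using integrable_integral[OF int[OF e]] by simp
  then have "((g \<circ> (+) e) has_integral integral {e..x + e} g) (cbox 0 x)"
    by (subst has_integral_shift_cbox_iff)
  then have shifted: "((\<lambda>t. g (t + e)) has_integral integral {e..x + e} g) {0..x}"
    by (simp add: o_def add.commute)
  have "integral {0..e} g + integral {e..x + e} g = integral {0..x + e} g"
    "integral {0..x} g + integral {x..x + e} g = integral {0..x + e} g"
    by (intro Henstock_Kurzweil_Integration.integral_combine int; use x e in simp)+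
  then have "integral {e..x + e} g - integral {0..x} g = integral {x..x + e} g - integral {0..e} g"
    by linarith
  with has_integral_diff[OF shifted integrable_integral[OF int[of 0 x]]] show ?thesis by simp
qed

lemma integral_window_bounds:
  assumes g: "mono_lip_concave g" and a: "0 \<le> a" and e: "0 \<le> e"
  shows "e * g a \<le> integral {a..a + e} g" "integral {a..a + e} g \<le> e * (g a + e)"
proof -
  have int: "g integrable_on {a..a + e}"
    by (rule integrable_continuous_interval, rule continuous_on_subset[OF mono_lip_concave_continuous_on[OF g]])
      (use a in auto)
  have "integral {a..a + e} (\<lambda>_. g a) \<le> integral {a..a + e} g"
    by (rule integral_le) (use int mono_lip_concave_mono_lip[OF g a] in auto)
  then show "e * g a \<le> integral {a..a + e} g" using e by simp
  have "integral {a..a + e} g \<le> integral {a..a + e} (\<lambda>_. g a + e)"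
    by (rule integral_le) (use int mono_lip_concave_mono_lip[OF g a] in \<open>auto, force\<close>)
  then show "integral {a..a + e} g \<le> e * (g a + e)" using e by simp
qed

lemma has_integral_right_deriv:
  assumes g: "mono_lip_concave g" and x: "0 \<le> x"
  shows "(right_deriv g has_integral g x - g 0) {0..x}"
proof -
  \<comment> \<open>the difference quotients with step \<open>e k\<close> integrate to averages of \<open>g\<close> over windows of
    length \<open>e k\<close>, which tend to \<open>g x - g 0\<close>; dominated convergence does the rest\<close>
  define e where "e k = 1 / real (Suc k)" for k
  have e: "0 < e k" for k by (simp add: e_def)
  define y where "y k = (integral {x..x + e k} g - integral {0..e k} g) / e k" for k
  have quotients: "((\<lambda>t. slope g t (t + e k)) has_integral y k) {0..x}" for k
    using has_integral_divide[OF has_integral_forward_difference[OF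
        mono_lip_concave_continuous_on[OF g] x less_imp_le[OF e]]]
    by (simp add: slope_def y_def)
  have close: "norm (y k - (g x - g 0)) \<le> e k" for k
  proof -
    have "e k * (g x - g 0 - e k) \<le> integral {x..x + e k} g - integral {0..e k} g"
      "integral {x..x + e k} g - integral {0..e k} g \<le> e k * (g x - g 0 + e k)"
      using integral_window_bounds[OF g x less_imp_le[OF e[of k]]]
        integral_window_bounds[OF g order_refl less_imp_le[OF e[of k]]]
      by (simp_all add: algebra_simps)
    then have "g x - g 0 - e k \<le> y k" "y k \<le> g x - g 0 + e k"
      using e[of k] by (simp_all add: y_def pos_le_divide_eq pos_divide_le_eq mult.commute)
    then show ?thesis by (simp add: abs_le_iff)
  qed
  have "e \<longlonglongrightarrow> 0"
    unfolding e_def using LIMSEQ_inverse_real_of_nat by (simp add: inverse_eq_divide)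
  then have "(\<lambda>k. y k - (g x - g 0)) \<longlonglongrightarrow> 0"
    by (rule Lim_null_comparison[OF always_eventually, rotated]) (use close in blast)
  then have "y \<longlonglongrightarrow> g x - g 0" by (simp add: LIM_zero_iff)
  then show ?thesis
  proof (rule has_integral_dominated_convergence[OF quotients integrable_const_ivl[of 1], rotated 2])
    show "\<forall>t\<in>{0..x}. norm (slope g t (t + e k)) \<le> 1" for k
      using slope_bounds[OF g, of _ "_ + e k"] e[of k] by auto
    show "\<forall>t\<in>{0..x}. (\<lambda>k. slope g t (t + e k)) \<longlonglongrightarrow> right_deriv g t"
      using slope_tendsto_right_deriv[OF g] by (simp add: e_def)
  qed
qed

lemma right_deriv_set_borel_measurable:
  assumes g: "mono_lip_concave g"
  shows "set_borel_measurable lebesgue {0..} (right_deriv g)"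
proof -
  have "mono (\<lambda>t. - right_deriv g (max 0 t))"
    by (rule monoI) (use right_deriv_antimono[OF g] in auto)
  then have "(\<lambda>t. right_deriv g (max 0 t)) \<in> borel_measurable borel"
    using borel_measurable_uminus[OF borel_measurable_mono] by fastforce
  then have "(\<lambda>t. indicator {0..} t *\<^sub>R right_deriv g (max 0 t)) \<in> borel_measurable lebesgue"
    by (intro measurable_completion) measurable
  moreover have "(\<lambda>t. indicator {0..} t *\<^sub>R right_deriv g (max 0 t)) =
      (\<lambda>t. indicator {0..} t *\<^sub>R right_deriv g t)"
    by (auto simp: indicator_def)
  ultimately show ?thesis by (simp add: set_borel_measurable_def)
qed

lemma set_integral_right_deriv:
  assumes g: "mono_lip_concave g" and x: "0 \<le> x"
  shows "set_integrable lebesgue {0..x} (right_deriv g)"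
    and "(LINT t:{0..x}|lebesgue. right_deriv g t) = g x - g 0"
proof -
  have FTC: "(right_deriv g has_integral g x - g 0) {0..x}"
    by (rule has_integral_right_deriv[OF g x])
  show int: "set_integrable lebesgue {0..x} (right_deriv g)"
    using FTC right_deriv_bounds(1)[OF g]
    by (intro nonnegative_absolutely_integrable_1) (auto simp: integrable_on_def)
  show "(LINT t:{0..x}|lebesgue. right_deriv g t) = g x - g 0"
    using set_lebesgue_integral_eq_integral(2)[OF int] integral_unique[OF FTC] by simp
qed

lemma set_integral_right_deriv_nonneg_reals:
  assumes g: "mono_lip_concave g" and B: "\<And>x. 0 \<le> x \<Longrightarrow> g x - g 0 \<le> B"
  shows "set_integrable lebesgue {0..} (right_deriv g)"
    and "(LINT t:{0..}|lebesgue. right_deriv g t) \<le> B"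
proof -
  define f where "f n = (\<lambda>t. indicator {0..real n} t *\<^sub>R right_deriv g t)" for n
  define I where "I n = g (real n) - g 0" for n
  have f_int: "integrable lebesgue (f n)" and f_I: "integral\<^sup>L lebesgue (f n) = I n" for n
    using set_integral_right_deriv[OF g, of "real n"]
    by (simp_all add: f_def I_def set_integrable_def set_lebesgue_integral_def)
  have "incseq I"
    unfolding incseq_def I_def using mono_lip_concave_mono_lip[OF g] by force
  moreover have "bdd_above (range I)"
    using B by (auto simp: I_def bdd_above_def intro!: exI[of _ B])
  ultimately have I_lim: "I \<longlonglongrightarrow> (SUP n. I n)" by (rule LIMSEQ_incseq_SUP[rotated])
  have mono: "AE t in lebesgue. mono (\<lambda>n. f n t)"
    by (intro AE_I2 monoI) (use right_deriv_bounds(1)[OF g] in \<open>auto simp: f_def indicator_def\<close>)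
  have conv: "AE t in lebesgue. (\<lambda>n. f n t) \<longlonglongrightarrow> indicator {0..} t *\<^sub>R right_deriv g t"
  proof (rule AE_I2, rule tendsto_eventually)
    fix t :: real
    obtain N where "t \<le> real N" using real_arch_simple by blast
    then show "\<forall>\<^sub>F n in sequentially. f n t = indicator {0..} t *\<^sub>R right_deriv g t"
      unfolding eventually_sequentially
      by (intro exI[of _ N]) (auto simp: f_def indicator_def dest: order_trans[of t "real N"])
  qed
  have lim: "(\<lambda>n. integral\<^sup>L lebesgue (f n)) \<longlonglongrightarrow> (SUP n. I n)"
    using I_lim by (simp add: f_I)
  note meas = right_deriv_set_borel_measurable[OF g, unfolded set_borel_measurable_def]
  have "integrable lebesgue (\<lambda>t. indicator {0..} t *\<^sub>R right_deriv g t)"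
    "integral\<^sup>L lebesgue (\<lambda>t. indicator {0..} t *\<^sub>R right_deriv g t) = (SUP n. I n)"
    using integrable_monotone_convergence[OF f_int mono conv lim meas]
      integral_monotone_convergence[OF f_int mono conv lim meas] by blast+
  moreover have "(SUP n. I n) \<le> B" by (rule cSUP_least) (use B in \<open>auto simp: I_def\<close>)
  ultimately show "set_integrable lebesgue {0..} (right_deriv g)"
    "(LINT t:{0..}|lebesgue. right_deriv g t) \<le> B"
    by (simp_all add: set_integrable_def set_lebesgue_integral_def)
qed

section \<open>Antitone functions\<close>

text \<open>Equality case of the bathtub principle: for antitone \<open>H\<close> and \<open>0 \<le> K \<le> 1\<close> of total
  mass at most \<open>y\<close>, the integral of \<open>H K\<close> is at most that of \<open>H\<close> over \<open>[0, y]\<close>, because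
  \<open>(H t - H y) (K t - 1\<^bsub>[0,y]\<^esub> t) \<le> 0\<close> pointwise; equality forces this product to vanish.\<close>

lemma bathtub_equality:
  fixes H K :: "real \<Rightarrow> real"
  assumes H_antimono: "\<And>s t. 0 \<le> s \<Longrightarrow> s \<le> t \<Longrightarrow> H t \<le> H s" and "0 \<le> H y" "0 \<le> y"
    and K_bounds: "\<And>t. 0 \<le> t \<Longrightarrow> 0 \<le> K t \<and> K t \<le> 1"
    and HK_int: "set_integrable lebesgue {0..} (\<lambda>t. H t * K t)"
    and K_int: "set_integrable lebesgue {0..} K"
    and H_int: "set_integrable lebesgue {0..y} H"
    and K_mass: "(LINT t:{0..}|lebesgue. K t) \<le> y"
    and HK_eq: "(LINT t:{0..}|lebesgue. H t * K t) = (LINT t:{0..y}|lebesgue. H t)"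
  shows "AE t in lebesgue. 0 \<le> t \<longrightarrow> (H t - H y) * (K t - indicator {0..y} t) = 0"
proof -
  define D where "D t = indicator {0..} t * ((H t - H y) * (K t - indicator {0..y} t))" for t
  have D_eq: "D = (\<lambda>t. indicator {0..} t *\<^sub>R (H t * K t) - indicator {0..y} t *\<^sub>R H t
      - H y * (indicator {0..} t *\<^sub>R K t) + H y * indicator {0..y} t)"
    by (auto simp: D_def indicator_def algebra_simps)
  have Icc_int: "integrable lebesgue (indicator {0..y} :: real \<Rightarrow> real)"
    and Icc_measure: "integral\<^sup>L lebesgue (indicator {0..y} :: real \<Rightarrow> real) = y"
    using \<open>0 \<le> y\<close> by (simp_all add: emeasure_completion)
  have D_int: "integrable lebesgue D"
    using HK_int H_int K_int Icc_int unfolding D_eq set_integrable_def by simp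
  have "integral\<^sup>L lebesgue D = H y * (y - (LINT t:{0..}|lebesgue. K t))"
    using HK_int H_int K_int Icc_int HK_eq Icc_measure
    unfolding D_eq set_integrable_def set_lebesgue_integral_def by (simp add: algebra_simps)
  then have "0 \<le> integral\<^sup>L lebesgue D"
    using \<open>0 \<le> H y\<close> K_mass by simp
  moreover have D_nonpos: "D t \<le> 0" for t
  proof (cases "0 \<le> t")
    case True
    then show ?thesis
      using H_antimono[of t y] H_antimono[of y t] K_bounds[OF True] \<open>0 \<le> y\<close>
      by (cases "t \<le> y") (auto simp: D_def mult_nonneg_nonpos mult_nonpos_nonneg)
  qed (simp add: D_def)
  ultimately have "integral\<^sup>L lebesgue (\<lambda>t. - D t) = 0"
    using integral_nonneg_AE[of "\<lambda>t. - D t" lebesgue] by simp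
  then have "AE t in lebesgue. - D t = 0"
    using integral_nonneg_eq_0_iff_AE[of lebesgue "\<lambda>t. - D t"] D_int D_nonpos by simp
  then show ?thesis by eventually_elim (auto simp: D_def indicator_def)
qed

lemma antimono_threshold:
  fixes H :: "real \<Rightarrow> real"
  assumes antimono: "\<And>s t. 0 < s \<Longrightarrow> s \<le> t \<Longrightarrow> H t \<le> H s"
    and p: "0 < p" "v < H p" and q: "0 < q" "H q < v"
  obtains x where "0 < x" "\<And>t. 0 < t \<Longrightarrow> t < x \<Longrightarrow> v \<le> H t" "\<And>y. x < y \<Longrightarrow> H y < v"
proof -
  define S where "S = {t. 0 < t \<and> H t < v}"
  have "q \<in> S" using q by (simp add: S_def)
  then have S: "S \<noteq> {}" "bdd_below S"
    by (blast, auto simp: S_def bdd_below_def intro!: exI[of _ 0])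
  have p_lower: "p \<le> s" if "s \<in> S" for s
  proof (rule ccontr)
    assume "\<not> p \<le> s"
    then have "H p \<le> H s" using that by (intro antimono) (auto simp: S_def)
    then show False using that p by (simp add: S_def)
  qed
  show ?thesis
  proof (rule that)
    show "0 < Inf S" using p(1) cInf_greatest[OF S(1) p_lower] by linarith
    show "v \<le> H t" if "0 < t" "t < Inf S" for t
    proof (rule ccontr)
      assume "\<not> v \<le> H t"
      then have "t \<in> S" using that by (simp add: S_def)
      then show False using cInf_lower[OF _ S(2), of t] that by simp
    qed
    show "H y < v" if y: "Inf S < y" for y
    proof -
      obtain s where s: "s \<in> S" "s < y" using cInf_less_iff[OF S] y by blast
      then have "H y \<le> H s" by (intro antimono) (auto simp: S_def)
      then show ?thesis using s by (simp add: S_def)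
    qed
  qed
qed

section \<open>Markov products of tail dependence functions\<close>

lemma M2_section_mono_lip_concave:
  assumes L: "\<Lambda> \<in> M2" and w: "0 \<le> w"
  shows "mono_lip_concave (\<Lambda> w)"
proof -
  have mono_lip: "\<Lambda> w s \<le> \<Lambda> w t \<and> \<Lambda> w t - \<Lambda> w s \<le> t - s" if "0 \<le> s" "s \<le> t" for s t
    using M2_mono2[OF L w that] M2_lipschitz2[OF L w that] by simp
  \<comment> \<open>homogeneity turns the rectangle inequality on \<open>[w/r, w] \<times> [a/r, a]\<close> into geometric increments\<close>
  have "\<Lambda> w (a * r) - \<Lambda> w a \<le> r * (\<Lambda> w a - \<Lambda> w (a / r))" if a: "0 < a" and r: "1 < r" for a r
  proof -
    have wr: "0 \<le> w / r" "w / r \<le> w" using w r mult_left_mono[of 1 r w] by (auto simp: divide_le_eq)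
    have "\<Lambda> w (a * r) = r * \<Lambda> (w / r) a" "\<Lambda> w a = r * \<Lambda> (w / r) (a / r)"
      using M2_homogeneous[OF L wr(1), of a r] M2_homogeneous[OF L wr(1), of "a / r" r] a r
      by (simp_all add: mult.commute)
    then have "\<Lambda> w (a * r) - \<Lambda> w a = r * (\<Lambda> (w / r) a - \<Lambda> (w / r) (a / r))"
      by (simp add: algebra_simps)
    also have "\<dots> \<le> r * (\<Lambda> w a - \<Lambda> w (a / r))"
      using M2_rect[OF L wr(1,2), of "a / r" a] a r by (simp add: divide_le_eq)
    finally show ?thesis .
  qed
  then have "concave_on {0..} (\<Lambda> w)"
    by (intro concave_on_if_geometric_increments continuous_on_if_mono_lip mono_lip)
  with mono_lip show ?thesis unfolding mono_lip_concave_def by blast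
qed

lemma M2_section1_mono_lip_concave:
  "\<Lambda> \<in> M2 \<Longrightarrow> 0 \<le> w \<Longrightarrow> mono_lip_concave (\<lambda>t. \<Lambda> t w)"
  using M2_section_mono_lip_concave[OF M2_swap] .

lemma set_integral_nonneg_reals_cong_countable:
  fixes f g :: "real \<Rightarrow> real"
  assumes X: "countable X" and eq: "\<And>t. 0 < t \<Longrightarrow> t \<notin> X \<Longrightarrow> f t = g t"
  shows "(LINT t:{0..}|lebesgue. f t) = (LINT t:{0..}|lebesgue. g t)"
  unfolding set_lebesgue_integral_def
proof (rule integral_discrete_difference[where X = "insert 0 X"])
  show "countable (insert 0 X)" using X by simp
  fix x :: real
  show "emeasure lebesgue {x} = 0" by (simp add: emeasure_completion)
  show "{x} \<in> sets lebesgue" by simp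
  assume "x \<in> space lebesgue" "x \<notin> insert 0 X"
  then show "indicator {0..} x *\<^sub>R f x = indicator {0..} x *\<^sub>R g x"
    using eq[of x] by (cases "0 < x") (auto simp: indicator_def)
qed

lemma markov_prod_eq_right_deriv:
  assumes "\<Lambda>1 \<in> M2" "\<Lambda>2 \<in> M2" "0 \<le> w1" "0 \<le> w2"
  shows "markov_prod \<Lambda>1 \<Lambda>2 w1 w2 =
    (LINT t:{0..}|lebesgue. right_deriv (\<Lambda>1 w1) t * right_deriv (\<lambda>t. \<Lambda>2 t w2) t)"
proof -
  have g1: "mono_lip_concave (\<Lambda>1 w1)" and g2: "mono_lip_concave (\<lambda>t. \<Lambda>2 t w2)"
    using M2_section_mono_lip_concave M2_section1_mono_lip_concave assms by blast+
  let ?X = "{t \<in> {0<..}. \<not> isCont (right_deriv (\<Lambda>1 w1)) t} \<union>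
    {t \<in> {0<..}. \<not> isCont (right_deriv (\<lambda>t. \<Lambda>2 t w2)) t}"
  have "countable ?X"
    using countable_discontinuities_right_deriv[OF g1] countable_discontinuities_right_deriv[OF g2]
    by (rule countable_Un)
  moreover have "deriv (\<Lambda>1 w1) t * deriv (\<lambda>t. \<Lambda>2 t w2) t =
      right_deriv (\<Lambda>1 w1) t * right_deriv (\<lambda>t. \<Lambda>2 t w2) t" if "0 < t" "t \<notin> ?X" for t
    using that DERIV_imp_deriv[OF has_real_derivative_right_deriv[OF g1]]
      DERIV_imp_deriv[OF has_real_derivative_right_deriv[OF g2]] by simp
  ultimately show ?thesis
    unfolding markov_prod_def by (rule set_integral_nonneg_reals_cong_countable)
qed

lemma deriv_transform_open:
  fixes f h :: "real \<Rightarrow> real"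
  assumes "(h has_real_derivative D) (at t)" "open U" "t \<in> U" "\<And>s. s \<in> U \<Longrightarrow> f s = h s"
  shows "deriv f t = D"
  by (rule DERIV_imp_deriv, rule has_field_derivative_transform_within_open[OF assms(1-3)])
    (use assms(4) in auto)

lemma deriv_min_section:
  fixes f :: "real \<Rightarrow> real"
  assumes f: "\<And>s. 0 \<le> s \<Longrightarrow> f s = min w s" and t: "0 < t" "t \<noteq> w"
  shows "deriv f t = (if t < w then 1 else 0)"
proof (cases "t < w")
  case True
  have "deriv f t = 1"
    by (rule deriv_transform_open[where U = "{0<..<w}" and h = "\<lambda>s. s"]) (use t True f in auto)
  then show ?thesis using True by simp
next
  case False
  have "deriv f t = 0"
    by (rule deriv_transform_open[where U = "{max 0 w<..}" and h = "\<lambda>_. w"]) (use t False f in auto)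
  then show ?thesis using False by simp
qed

lemma markov_prod_zero:
  assumes zero: "\<And>w1 w2. 0 \<le> w1 \<Longrightarrow> 0 \<le> w2 \<Longrightarrow> \<Lambda> w1 w2 = 0" and w1: "0 \<le> w1"
  shows "markov_prod \<Lambda> \<Lambda> w1 w2 = 0"
proof -
  have deriv: "deriv (\<Lambda> w1) t = 0" if "0 < t" for t
    by (rule deriv_transform_open[where U = "{0<..}" and h = "\<lambda>_. 0"]) (use that zero w1 in auto)
  have "markov_prod \<Lambda> \<Lambda> w1 w2 = (LINT t:{0::real..}|lebesgue. 0)"
    unfolding markov_prod_def
    by (rule set_integral_nonneg_reals_cong_countable[where X = "{}"]) (simp_all add: deriv)
  then show ?thesis by (simp add: set_lebesgue_integral_def)
qed

lemma markov_prod_min: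
  assumes min: "\<And>w1 w2. 0 \<le> w1 \<Longrightarrow> 0 \<le> w2 \<Longrightarrow> \<Lambda> w1 w2 = min w1 w2"
    and w: "0 \<le> w1" "0 \<le> w2"
  shows "markov_prod \<Lambda> \<Lambda> w1 w2 = min w1 w2"
proof -
  have deriv: "deriv (\<Lambda> w1) t * deriv (\<lambda>t. \<Lambda> t w2) t = indicator {0..min w1 w2} t"
    if "0 < t" "t \<notin> {w1, w2}" for t
    using deriv_min_section[of "\<Lambda> w1" w1 t] deriv_min_section[of "\<lambda>t. \<Lambda> t w2" w2 t] that min w
    by (auto simp: min.commute indicator_def)
  have "markov_prod \<Lambda> \<Lambda> w1 w2 = (LINT t:{0..}|lebesgue. indicator {0..min w1 w2} t)"
    unfolding markov_prod_def
    by (rule set_integral_nonneg_reals_cong_countable[where X = "{w1, w2}"]) (simp_all add: deriv)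
  also have "\<dots> = integral\<^sup>L lebesgue (indicator {0..min w1 w2} :: real \<Rightarrow> real)"
    unfolding set_lebesgue_integral_def by (intro Bochner_Integration.integral_cong) (auto simp: indicator_def)
  also have "\<dots> = min w1 w2" using w by (simp add: emeasure_completion)
  finally show ?thesis .
qed

section \<open>Idempotent tail dependence functions\<close>

lemma M2_idempotent_right_deriv_ae:
  assumes L: "\<Lambda> \<in> M2" and idem: "markov_prod \<Lambda> \<Lambda> 1 y = \<Lambda> 1 y" and y: "0 \<le> y"
  shows "AE t in lebesgue. 0 \<le> t \<longrightarrow>
    (right_deriv (\<Lambda> 1) t - right_deriv (\<Lambda> 1) y) *
    (right_deriv (\<lambda>t. \<Lambda> t y) t - indicator {0..y} t) = 0"
proof -
  define H where "H = right_deriv (\<Lambda> 1)"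
  define K where "K = right_deriv (\<lambda>t. \<Lambda> t y)"
  have gH: "mono_lip_concave (\<Lambda> 1)" and gK: "mono_lip_concave (\<lambda>t. \<Lambda> t y)"
    using M2_section_mono_lip_concave[OF L] M2_section1_mono_lip_concave[OF L y] by simp_all
  have H_bounds: "0 \<le> H t" "H t \<le> 1" and K_bounds: "0 \<le> K t" "K t \<le> 1" if "0 \<le> t" for t
    using right_deriv_bounds[OF gH that] right_deriv_bounds[OF gK that] by (simp_all add: H_def K_def)
  have "\<Lambda> t y - \<Lambda> 0 y \<le> y" if "0 \<le> t" for t
    using M2_bounds(3)[OF L that y] M2_zero_left[OF L y] by simp
  then have K_int: "set_integrable lebesgue {0..} K" and K_mass: "(LINT t:{0..}|lebesgue. K t) \<le> y"
    unfolding K_def using set_integral_right_deriv_nonneg_reals[OF gK] by blast+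
  have "set_borel_measurable lebesgue {0..} (\<lambda>t. H t * K t)"
  proof -
    have "(\<lambda>t. (indicator {0..} t *\<^sub>R H t) * (indicator {0..} t *\<^sub>R K t)) \<in> borel_measurable lebesgue"
      using right_deriv_set_borel_measurable[OF gH] right_deriv_set_borel_measurable[OF gK]
      unfolding set_borel_measurable_def H_def K_def by (rule borel_measurable_times)
    then show ?thesis
      unfolding set_borel_measurable_def by (rule measurable_cong[THEN iffD1, rotated]) (simp add: indicator_def)
  qed
  then have HK_int: "set_integrable lebesgue {0..} (\<lambda>t. H t * K t)"
    by (rule set_integrable_bound[OF K_int]) (use H_bounds K_bounds in \<open>auto intro!: mult_left_le_one_le\<close>)
  have "(LINT t:{0..}|lebesgue. H t * K t) = \<Lambda> 1 y"
    using markov_prod_eq_right_deriv[OF L L _ y] idem by (simp add: H_def K_def)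
  also have "\<dots> = (LINT t:{0..y}|lebesgue. H t)"
    using set_integral_right_deriv(2)[OF gH y] M2_bounds[OF L, of 1 0] by (simp add: H_def)
  finally have "AE t in lebesgue. 0 \<le> t \<longrightarrow> (H t - H y) * (K t - indicator {0..y} t) = 0"
    using K_bounds by (intro bathtub_equality[OF right_deriv_antimono[OF gH, folded H_def]
        H_bounds(1)[OF y] y _ HK_int K_int set_integral_right_deriv(1)[OF gH y, folded H_def] K_mass])
      auto
  then show ?thesis by (simp add: H_def K_def)
qed

lemma M2_idempotent_eq_left:
  assumes L: "\<Lambda> \<in> M2" and idem: "markov_prod \<Lambda> \<Lambda> 1 y = \<Lambda> 1 y" and x: "0 < x" "x < y"
    and drop: "\<And>t. 0 < t \<Longrightarrow> t < x \<Longrightarrow> right_deriv (\<Lambda> 1) y < right_deriv (\<Lambda> 1) t"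
  shows "\<Lambda> x y = x"
proof -
  define K where "K = right_deriv (\<lambda>t. \<Lambda> t y)"
  have y: "0 \<le> y" using x by simp
  have "AE t in lebesgue. t \<in> {0<..<x} \<longrightarrow> K t = 1"
    using M2_idempotent_right_deriv_ae[OF L idem y]
  proof eventually_elim
    case (elim t)
    then show ?case using drop[of t] x by (auto simp: K_def)
  qed
  then obtain N where N: "\<And>t. t \<in> space lebesgue - N \<Longrightarrow> t \<in> {0<..<x} \<longrightarrow> K t = 1"
    "N \<in> null_sets lebesgue"
    by (elim AE_E3) blast
  then have null: "negligible (insert 0 (insert x N))"
    by (simp add: negligible_iff_null_sets)
  have "((\<lambda>_. 1) has_integral x) {0..x}"
    using has_integral_const_real[of "1::real" 0 x] x by simp
  then have "(K has_integral x) {0..x}"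
    by (rule has_integral_spike[OF null, rotated]) (use N in auto)
  moreover have "(K has_integral \<Lambda> x y) {0..x}"
    using has_integral_right_deriv[OF M2_section1_mono_lip_concave[OF L y], of x] x
      M2_zero_left[OF L y] by (simp add: K_def)
  ultimately show ?thesis by (rule has_integral_unique[symmetric])
qed

text \<open>With \<open>\<lambda> = \<Lambda>(1, 1)\<close>, the chord of \<open>\<Lambda>(1, \<cdot>)\<close> over \<open>[\<lambda>/4, 1]\<close> has slope above \<open>\<lambda>/2\<close>, while
  \<open>\<Lambda>(1, \<cdot>) \<le> 1\<close> makes the chord over \<open>[4/\<lambda>, 8/\<lambda>]\<close> have slope at most \<open>\<lambda>/4\<close>.\<close>

lemma M2_right_deriv_crosses_half_diag:
  assumes L: "\<Lambda> \<in> M2" and pos: "0 < \<Lambda> 1 1"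
  defines "lam \<equiv> \<Lambda> 1 1"
  shows "lam / 2 < right_deriv (\<Lambda> 1) (lam / 4)" "right_deriv (\<Lambda> 1) (8 / lam) < lam / 2"
proof -
  have g: "mono_lip_concave (\<Lambda> 1)" by (rule M2_section_mono_lip_concave[OF L]) simp
  have lam: "0 < lam" "lam \<le> 1" using pos M2_bounds(2)[OF L, of 1 1] by (simp_all add: lam_def)
  have "lam - \<Lambda> 1 (lam / 4) \<le> slope (\<Lambda> 1) (lam / 4) 1"
    using M2_mono2[OF L, of 1 "lam / 4" 1] lam
    by (simp add: slope_def lam_def le_divide_eq mult_left_le)
  moreover have "slope (\<Lambda> 1) (lam / 4) 1 \<le> right_deriv (\<Lambda> 1) (lam / 4)"
    by (rule slope_le_right_deriv[OF g]) (use lam in auto)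
  ultimately show "lam / 2 < right_deriv (\<Lambda> 1) (lam / 4)"
    using M2_bounds(3)[OF L, of 1 "lam / 4"] lam by simp
  have "right_deriv (\<Lambda> 1) (8 / lam) \<le> slope (\<Lambda> 1) (4 / lam) (8 / lam)"
    by (rule right_deriv_le_slope[OF g]) (use lam in \<open>auto simp: divide_strict_right_mono\<close>)
  also have "\<dots> = (\<Lambda> 1 (8 / lam) - \<Lambda> 1 (4 / lam)) * lam / 4"
    using lam by (simp add: slope_def field_simps)
  also have "\<dots> \<le> 1 * lam / 4"
    using M2_bounds(2)[OF L, of 1 "8 / lam"] M2_bounds(1)[OF L, of 1 "4 / lam"] lam
    by (intro divide_right_mono mult_right_mono) auto
  finally show "right_deriv (\<Lambda> 1) (8 / lam) < lam / 2" using lam by simp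
qed

lemma M2_idempotent_diag_one:
  assumes L: "\<Lambda> \<in> M2" and idem: "\<And>y. 0 < y \<Longrightarrow> markov_prod \<Lambda> \<Lambda> 1 y = \<Lambda> 1 y"
    and pos: "0 < \<Lambda> 1 1"
  shows "\<Lambda> 1 1 = 1"
proof -
  define lam where "lam = \<Lambda> 1 1"
  define H where "H = right_deriv (\<Lambda> 1)"
  have g: "mono_lip_concave (\<Lambda> 1)" by (rule M2_section_mono_lip_concave[OF L]) simp
  have lam: "0 < lam" "lam \<le> 1" using pos M2_bounds(2)[OF L, of 1 1] by (simp_all add: lam_def)
  obtain x where x: "0 < x" and above: "\<And>t. 0 < t \<Longrightarrow> t < x \<Longrightarrow> lam / 2 \<le> H t"
    and below: "\<And>y. x < y \<Longrightarrow> H y < lam / 2"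
    by (rule antimono_threshold[of H "lam / 4" "lam / 2" "8 / lam"])
      (use right_deriv_antimono[OF g] M2_right_deriv_crosses_half_diag[OF L pos] lam
        in \<open>auto simp: H_def lam_def\<close>)
  have "x \<le> y * lam" if "x < y" for y
  proof -
    have y: "0 < y" using x that by simp
    have "\<Lambda> x y = x"
      by (rule M2_idempotent_eq_left[OF L idem[OF y] x that])
        (use above below[OF that] in \<open>fastforce simp: H_def\<close>)
    moreover have "\<Lambda> (x / y) 1 \<le> lam"
      using M2_mono1[OF L, of 1 "x / y" 1] x that by (simp add: lam_def)
    ultimately show ?thesis
      using M2_eq_scaled[OF L less_imp_le[OF x] y] mult_left_mono[of "\<Lambda> (x / y) 1" lam y] y by simp
  qed
  \<comment> \<open>for \<open>lam < 1\<close> the point \<open>y = 2 x / (1 + lam)\<close> lies to the right of \<open>x\<close> and violates this\<close>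
  from this[of "2 * x / (1 + lam)"] have "1 \<le> lam"
    using x lam by (cases "lam < 1") (auto simp: field_simps)
  with lam show ?thesis by (simp add: lam_def)
qed

lemma M2_eq_zero_if_diag_zero:
  assumes L: "\<Lambda> \<in> M2" and diag: "\<Lambda> 1 1 = 0" and w: "0 \<le> w1" "0 \<le> w2"
  shows "\<Lambda> w1 w2 = 0"
proof (cases "w2 = 0")
  case False
  define a where "a = w1 / w2"
  have a: "0 \<le> a" using w by (simp add: a_def)
  have "\<Lambda> a 1 \<le> \<Lambda> (max a 1) (max a 1)"
    using M2_mono1[OF L, of 1 a "max a 1"] M2_mono2[OF L, of "max a 1" 1 "max a 1"] a by simp
  also have "\<dots> = 0"
    using M2_homogeneous[OF L, of 1 1 "max a 1"] diag by simp
  finally have "\<Lambda> a 1 = 0" using M2_bounds(1)[OF L a, of 1] by simp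
  then show ?thesis using M2_eq_scaled[OF L w(1), of w2] w False by (simp add: a_def)
qed (use M2_bounds[OF L w] in simp)

lemma M2_eq_min_if_diag_one:
  assumes L: "\<Lambda> \<in> M2" and diag: "\<Lambda> 1 1 = 1" and w: "0 \<le> w1" "0 \<le> w2"
  shows "\<Lambda> w1 w2 = min w1 w2"
proof (cases "w2 = 0")
  case False
  define a where "a = w1 / w2"
  have a: "0 \<le> a" using w by (simp add: a_def)
  have "\<Lambda> a 1 = min a 1"
    using M2_lipschitz1[OF L, of 1 a 1] M2_mono1[OF L, of 1 1 a] M2_bounds[OF L a, of 1] a diag
    by (cases "a \<le> 1") auto
  then have "\<Lambda> w1 w2 = w2 * min (w1 / w2) 1"
    using M2_eq_scaled[OF L w(1), of w2] w False by (simp add: a_def)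
  also have "\<dots> = min w1 w2" using w False by (simp add: min_def field_simps)
  finally show ?thesis .
qed (use M2_bounds[OF L w] w in simp)

theorem mainTheorem12:
  fixes \<Lambda> :: "real \<Rightarrow> real \<Rightarrow> real"
  assumes "\<Lambda> \<in> M2"
  shows "(\<forall>w1\<ge>0. \<forall>w2\<ge>0. markov_prod \<Lambda> \<Lambda> w1 w2 = \<Lambda> w1 w2) \<longleftrightarrow>
         ((\<forall>w1\<ge>0. \<forall>w2\<ge>0. \<Lambda> w1 w2 = min w1 w2) \<or> (\<forall>w1\<ge>0. \<forall>w2\<ge>0. \<Lambda> w1 w2 = 0))"
proof
  assume idem: "\<forall>w1\<ge>0. \<forall>w2\<ge>0. markov_prod \<Lambda> \<Lambda> w1 w2 = \<Lambda> w1 w2"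
  consider "\<Lambda> 1 1 = 0" | "0 < \<Lambda> 1 1" using M2_bounds(1)[OF assms, of 1 1] by linarith
  then show "(\<forall>w1\<ge>0. \<forall>w2\<ge>0. \<Lambda> w1 w2 = min w1 w2) \<or> (\<forall>w1\<ge>0. \<forall>w2\<ge>0. \<Lambda> w1 w2 = 0)"
  proof cases
    case 1
    then show ?thesis using M2_eq_zero_if_diag_zero[OF assms] by blast
  next
    case 2
    then have "\<Lambda> 1 1 = 1" using M2_idempotent_diag_one[OF assms] idem by simp
    then show ?thesis using M2_eq_min_if_diag_one[OF assms] by blast
  qed
next
  assume "(\<forall>w1\<ge>0. \<forall>w2\<ge>0. \<Lambda> w1 w2 = min w1 w2) \<or> (\<forall>w1\<ge>0. \<forall>w2\<ge>0. \<Lambda> w1 w2 = 0)"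
  then show "\<forall>w1\<ge>0. \<forall>w2\<ge>0. markov_prod \<Lambda> \<Lambda> w1 w2 = \<Lambda> w1 w2"
    using markov_prod_min[of \<Lambda>] markov_prod_zero[of \<Lambda>] by auto
qed

end
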